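(* Let $I$ be a nontrivial ideal of $\mathbb{N}\times\mathbb{N}$ containing all sets of the form $H\times\mathbb{N}$ with $H$ a finite subset of $\mathbb{N}$. If $(X,\tau)$ is $I$-sequentially compact in the sense of double sequences, then $(X,\tau)$ is countably compact.
   Context: An ideal $I$ on $\mathbb{N}\times\mathbb{N}$ is a family of subsets closed under finite unions and under taking subsets; it is nontrivial if $I\ne\{\emptyset\}$ and $\mathbb{N}\times\mathbb{N}\notin I$. $y\in X$ is an $I$-cluster point of a double sequence $\{x_{ij}\}$ in $X$ if for every open $U\ni y$, $\{(m,n)\in\mathbb{N}\times\mathbb{N}: x_{mn}\in U\}\notin I$. $(X,\tau)$ is $I$-sequentially compact in the sense of double sequences if every double sequence in $X$ has an $I$-cluster point. *)

theory Defs
  imports "HOL-Analysis.Analysis"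
begin

definition is_ideal :: "('a set) set \<Rightarrow> bool" where
  "is_ideal I \<longleftrightarrow> {} \<in> I \<and> (\<forall>A\<in>I. \<forall>B\<in>I. A \<union> B \<in> I) \<and> (\<forall>A\<in>I. \<forall>B. B \<subseteq> A \<longrightarrow> B \<in> I)"

definition nontrivial_ideal :: "('a set) set \<Rightarrow> bool" where
  "nontrivial_ideal I \<longleftrightarrow> is_ideal I \<and> I \<noteq> {{}} \<and> UNIV \<notin> I"

definition I_cluster_point ::
  "'a topology \<Rightarrow> ((nat \<times> nat) set) set \<Rightarrow> (nat \<Rightarrow> nat \<Rightarrow> 'a) \<Rightarrow> 'a \<Rightarrow> bool" where
  "I_cluster_point X I x y \<longleftrightarrow> y \<in> topspace X \<and>
     (\<forall>U. openin X U \<longrightarrow> y \<in> U \<longrightarrow> {(m, n). x m n \<in> U} \<notin> I)"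

definition I_seq_compact_double :: "'a topology \<Rightarrow> ((nat \<times> nat) set) set \<Rightarrow> bool" where
  "I_seq_compact_double X I \<longleftrightarrow>
     (\<forall>x. (\<forall>m n. x m n \<in> topspace X) \<longrightarrow> (\<exists>y. I_cluster_point X I x y))"

definition countably_compact_space :: "'a topology \<Rightarrow> bool" where
  "countably_compact_space X \<longleftrightarrow>
     (\<forall>\<U>. countable \<U> \<longrightarrow> (\<forall>U\<in>\<U>. openin X U) \<longrightarrow> topspace X \<subseteq> \<Union>\<U> \<longrightarrow>
        (\<exists>\<F>. finite \<F> \<and> \<F> \<subseteq> \<U> \<and> topspace X \<subseteq> \<Union>\<F>))"

end

theory Submission
  imports Defs
begin

text \<open>A double sequence that is constant along each row m is I-clustering at y only if
  its rows visit every neighbourhood of y infinitely often: otherwise the index set is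
  H \<times> \<nat> with H finite, which lies in I. So I-sequential compactness yields an ordinary
  accumulation point for every sequence, and a space in which every sequence
  accumulates is countably compact: given a countable open cover without finite
  subcover, choose p m outside the first m + 1 members; an accumulation point lies in
  some member g k, which contains only the points p m with m < k.\<close>

lemma I_cluster_point_row_constant_frequently:
  assumes "is_ideal I"
    and finite_rows: "\<And>H. finite H \<Longrightarrow> H \<times> (UNIV :: nat set) \<in> I"
    and "I_cluster_point X I (\<lambda>m n. p m) y"
    and "openin X U" and "y \<in> U"
  shows "\<exists>\<^sub>\<infinity>m. p m \<in> U"
proof (rule ccontr)
  assume "\<not> (\<exists>\<^sub>\<infinity>m. p m \<in> U)"
  then have "{m. p m \<in> U} \<times> (UNIV :: nat set) \<in> I"
    using finite_rows by (simp add: Inf_many_def)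
  moreover have "{(m, n). p m \<in> U} = {m. p m \<in> U} \<times> (UNIV :: nat set)"
    by auto
  moreover have "{(m, n). p m \<in> U} \<notin> I"
    using assms(3-5) unfolding I_cluster_point_def by blast
  ultimately show False
    by simp
qed

lemma countably_compact_space_if_sequences_accumulate:
  fixes X :: "'a topology"
  assumes accumulate: "\<And>p :: nat \<Rightarrow> 'a. range p \<subseteq> topspace X \<Longrightarrow>
    \<exists>y\<in>topspace X. \<forall>U. openin X U \<longrightarrow> y \<in> U \<longrightarrow> (\<exists>\<^sub>\<infinity>m. p m \<in> U)"
  shows "countably_compact_space X"
  unfolding countably_compact_space_def
proof (intro allI impI)
  fix \<U> :: "'a set set"
  assume "countable \<U>" and open_\<U>: "\<forall>U\<in>\<U>. openin X U" and cover: "topspace X \<subseteq> \<Union>\<U>"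
  show "\<exists>\<F>. finite \<F> \<and> \<F> \<subseteq> \<U> \<and> topspace X \<subseteq> \<Union>\<F>"
  proof (rule ccontr)
    assume no_finite_subcover: "\<not> ?thesis"
    then have "\<U> \<noteq> {}"
      using cover by auto
    define g where "g = from_nat_into \<U>"
    have range_g: "range g = \<U>"
      unfolding g_def using \<open>\<U> \<noteq> {}\<close> \<open>countable \<U>\<close> by (rule range_from_nat_into)
    have "\<exists>q. q \<in> topspace X \<and> q \<notin> (\<Union>k\<le>m. g k)" for m
    proof -
      have "finite (g ` {..m})" and "g ` {..m} \<subseteq> \<U>"
        using range_g by auto
      then have "\<not> topspace X \<subseteq> \<Union>(g ` {..m})"
        using no_finite_subcover by blast
      then show ?thesis
        by blast
    qed
    then obtain p where p: "\<And>m. p m \<in> topspace X" "\<And>m. p m \<notin> (\<Union>k\<le>m. g k)"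
      by metis
    obtain y where "y \<in> topspace X"
      and y: "\<And>U. openin X U \<Longrightarrow> y \<in> U \<Longrightarrow> \<exists>\<^sub>\<infinity>m. p m \<in> U"
      using accumulate[of p] p(1) by auto
    then obtain k where "y \<in> g k"
      using cover range_g by blast
    have "openin X (g k)"
      using open_\<U> range_g by blast
    then have "\<exists>\<^sub>\<infinity>m. p m \<in> g k"
      using \<open>y \<in> g k\<close> by (rule y)
    moreover have "{m. p m \<in> g k} \<subseteq> {..<k}"
      using p(2) by (force simp: not_le[symmetric])
    ultimately show False
      unfolding Inf_many_def using finite_subset by blast
  qed
qed

theorem theorem4p4:
  fixes X :: "'a topology" and I :: "((nat \<times> nat) set) set"
  assumes "nontrivial_ideal I"
    and "\<And>H. finite H \<Longrightarrow> H \<times> (UNIV :: nat set) \<in> I"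
    and "I_seq_compact_double X I"
  shows "countably_compact_space X"
proof (rule countably_compact_space_if_sequences_accumulate)
  fix p :: "nat \<Rightarrow> 'a"
  assume "range p \<subseteq> topspace X"
  then have "\<forall>m n. p m \<in> topspace X"
    by blast
  then obtain y where y: "I_cluster_point X I (\<lambda>m n. p m) y"
    using assms(3) unfolding I_seq_compact_double_def by (elim allE[of _ "\<lambda>m n. p m"]) blast
  have "is_ideal I"
    using assms(1) unfolding nontrivial_ideal_def by blast
  note frequently = I_cluster_point_row_constant_frequently[OF this assms(2) y]
  have "y \<in> topspace X"
    using y unfolding I_cluster_point_def by blast
  with frequently show "\<exists>y\<in>topspace X. \<forall>U. openin X U \<longrightarrow> y \<in> U \<longrightarrow> (\<exists>\<^sub>\<infinity>m. p m \<in> U)"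
    by (intro bexI allI impI)
qed

end
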